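(* In the session calculus, strong weak fairness of instructions (SWI) coincides with strong fairness of components (SC): a path is SWI-fair iff it is SC-fair.
   Context: Session calculus: threads $P ::= \mathbf{end} \mid \bigoplus_{i\in I} p_i!\lambda_i;P_i \mid \sum_{i\in I} p_i?\lambda_i;P_i \mid X \mid \mu X.P$ (guarded recursion), thread states additionally $\langle q!\lambda\rangle;P$; networks $p[\![P]\!]\mid 0\mid N\parallel N$ with distinct locations and closed threads, modulo associativity/commutativity/unit. Transitions: (choice) $p[\![\bigoplus_{i\in I}p_i!\lambda_i;P_i]\!]\parallel N \xrightarrow{\tau} p[\![\langle p_k!\lambda_k\rangle;P_k]\!]\parallel N$; (unfold) $p[\![\mu X.P]\!]\parallel N\xrightarrow{\tau} p[\![P\{\mu X.P/X\}]\!]\parallel N$; (comm) $p_k[\![\langle q!\lambda_k\rangle;Q]\!]\parallel q[\![\sum_{i\in I}p_i?\lambda_i;P_i]\!]\parallel N \xrightarrow{(p_k,\lambda_k,q)} p_k[\![Q]\!]\parallel q[\![P_k]\!]\parallel N$. $\mathrm{comp}(t)$ is the moving location for a $\tau$-transition and $\{p,q\}$ for label $(p,\lambda,q)$. A path is a network state with a maximal sequence of transitions. Instructions: the occurrences of subexpressions $p_k!\lambda_k$, $p_k?\lambda_k$ or $\mu X$ in the network expression; each $\tau$-transition stems from one instruction and each communication transition from two; $\mathrm{instr}(t)$ is this set. Instruction $I$ is enabled in $N$ if some transition $t$ from $N$ has $I\in\mathrm{instr}(t)$; it is requested in $N$ if it is ready to be executed by its own thread in $N$ (even if not enabled for lack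 of a synchronisation partner); a path engages in $I$ if it contains $t$ with $I\in\mathrm{instr}(t)$. A path $\pi$ is SWI-fair if for every suffix $\pi'$, every instruction that is requested in every state of $\pi'$ and enabled in some state of every suffix of $\pi'$ is engaged in by $\pi'$. A path $\pi$ is SC-fair if for every suffix $\pi'$, every location $p$ such that every suffix of $\pi'$ contains a state with a transition $t$ satisfying $p\in\mathrm{comp}(t)$ has a transition involving $p$ in $\pi'$. *)

theory Defs
  imports Main "HOL-Library.Extended_Nat"
begin

text \<open>Every instruction occurrence (an output prefix p!l, an input prefix p?l, a
  recursion binder mu X, and also the pending output of a thread state) carries a
  label of type 'lab naming the occurrence. Labels are inherited by copies created
  by unfolding, so an instruction of any later state is identified with the
  occurrence in the initial network expression it stems from. A branch of a choice
  is (label, partner location, message, continuation).\<close>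

datatype ('loc, 'msg, 'lab, 'var) thread =
    End
  | Choice "('lab \<times> 'loc \<times> 'msg \<times> ('loc, 'msg, 'lab, 'var) thread) list"
      \<comment> \<open>internal choice: big-oplus of p_i!l_i;P_i\<close>
  | Branch "('lab \<times> 'loc \<times> 'msg \<times> ('loc, 'msg, 'lab, 'var) thread) list"
      \<comment> \<open>external choice: sum of p_i?l_i;P_i\<close>
  | Var 'var
  | Mu 'lab 'var "('loc, 'msg, 'lab, 'var) thread"
  | Pending 'lab 'loc 'msg "('loc, 'msg, 'lab, 'var) thread"
      \<comment> \<open>thread state: chosen output q!l, awaiting communication\<close>

fun subst :: "'var \<Rightarrow> ('loc, 'msg, 'lab, 'var) thread \<Rightarrow> ('loc, 'msg, 'lab, 'var) thread
                \<Rightarrow> ('loc, 'msg, 'lab, 'var) thread" where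
  "subst X Q End = End"
| "subst X Q (Choice bs) = Choice (map (\<lambda>(l, p, m, P). (l, p, m, subst X Q P)) bs)"
| "subst X Q (Branch bs) = Branch (map (\<lambda>(l, p, m, P). (l, p, m, subst X Q P)) bs)"
| "subst X Q (Var Y) = (if X = Y then Q else Var Y)"
| "subst X Q (Mu l Y P) = (if X = Y then Mu l Y P else Mu l Y (subst X Q P))"
| "subst X Q (Pending l q m P) = Pending l q m (subst X Q P)"

fun fv :: "('loc, 'msg, 'lab, 'var) thread \<Rightarrow> 'var set" where
  "fv End = {}"
| "fv (Choice bs) = (\<Union>(l, p, m, P) \<in> set bs. fv P)"
| "fv (Branch bs) = (\<Union>(l, p, m, P) \<in> set bs. fv P)"
| "fv (Var X) = {X}"
| "fv (Mu l X P) = fv P - {X}"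
| "fv (Pending l q m P) = fv P"

fun unguarded :: "('loc, 'msg, 'lab, 'var) thread \<Rightarrow> 'var set" where
  "unguarded End = {}"
| "unguarded (Choice bs) = {}"
| "unguarded (Branch bs) = {}"
| "unguarded (Var X) = {X}"
| "unguarded (Mu l X P) = unguarded P - {X}"
| "unguarded (Pending l q m P) = {}"

fun guarded :: "('loc, 'msg, 'lab, 'var) thread \<Rightarrow> bool" where
  "guarded End = True"
| "guarded (Choice bs) = (\<forall>(l, p, m, P) \<in> set bs. guarded P)"
| "guarded (Branch bs) = (\<forall>(l, p, m, P) \<in> set bs. guarded P)"
| "guarded (Var X) = True"
| "guarded (Mu l X P) = (X \<notin> unguarded P \<and> guarded P)"
| "guarded (Pending l q m P) = guarded P"

fun labels :: "('loc, 'msg, 'lab, 'var) thread \<Rightarrow> 'lab list" where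
  "labels End = []"
| "labels (Choice bs) = concat (map (\<lambda>(l, p, m, P). l # labels P) bs)"
| "labels (Branch bs) = concat (map (\<lambda>(l, p, m, P). l # labels P) bs)"
| "labels (Var X) = []"
| "labels (Mu l X P) = l # labels P"
| "labels (Pending l q m P) = l # labels P"

text \<open>A network assigns threads to finitely many distinct locations; this
  representation is modulo associativity, commutativity and unit 0.\<close>
type_synonym ('loc, 'msg, 'lab, 'var) network = "'loc \<rightharpoonup> ('loc, 'msg, 'lab, 'var) thread"

text \<open>An instruction is an occurrence, identified by its location and label.\<close>
type_synonym ('loc, 'lab) instr = "'loc \<times> 'lab"

text \<open>Transition labels; the tau label is annotated with the moving location
  (needed to define comp).\<close>
datatype ('loc, 'msg) act = Tau 'loc | Com 'loc 'msg 'loc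

fun comp :: "('loc, 'msg) act \<Rightarrow> 'loc set" where
  "comp (Tau p) = {p}"
| "comp (Com p m q) = {p, q}"

text \<open>step N a I N': a transition from N to N' with label a stemming from the set
  of instructions I.\<close>
inductive step :: "('loc, 'msg, 'lab, 'var) network \<Rightarrow> ('loc, 'msg) act
                   \<Rightarrow> ('loc, 'lab) instr set \<Rightarrow> ('loc, 'msg, 'lab, 'var) network \<Rightarrow> bool" where
  choice: "\<lbrakk> N p = Some (Choice bs); k < length bs; bs ! k = (l, q, m, P) \<rbrakk>
           \<Longrightarrow> step N (Tau p) {(p, l)} (N(p \<mapsto> Pending l q m P))"
| unfold: "N p = Some (Mu l X P)
           \<Longrightarrow> step N (Tau p) {(p, l)} (N(p \<mapsto> subst X (Mu l X P) P))"
| comm: "\<lbrakk> N p = Some (Pending l q m Q); N q = Some (Branch bs); k < length bs;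
           bs ! k = (l', p, m, P); p \<noteq> q \<rbrakk>
           \<Longrightarrow> step N (Com p m q) {(p, l), (q, l')} (N(p \<mapsto> Q, q \<mapsto> P))"

definition enabled :: "('loc, 'lab) instr \<Rightarrow> ('loc, 'msg, 'lab, 'var) network \<Rightarrow> bool" where
  "enabled I N \<longleftrightarrow> (\<exists>a Is N'. step N a Is N' \<and> I \<in> Is)"

fun ready :: "('loc, 'msg, 'lab, 'var) thread \<Rightarrow> 'lab set" where
  "ready End = {}"
| "ready (Choice bs) = (\<lambda>(l, p, m, P). l) ` set bs"
| "ready (Branch bs) = (\<lambda>(l, p, m, P). l) ` set bs"
| "ready (Var X) = {}"
| "ready (Mu l X P) = {l}"
| "ready (Pending l q m P) = {l}"

definition requested :: "('loc, 'lab) instr \<Rightarrow> ('loc, 'msg, 'lab, 'var) network \<Rightarrow> bool" where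
  "requested I N \<longleftrightarrow> (\<exists>P. N (fst I) = Some P \<and> snd I \<in> ready P)"

text \<open>Well-formed initial network: finitely many locations, closed and guarded
  threads, and every occurrence carries its own label (so labels name exactly the
  occurrences of the network expression).\<close>
definition wf_network :: "('loc, 'msg, 'lab, 'var) network \<Rightarrow> bool" where
  "wf_network N \<longleftrightarrow> finite (dom N) \<and>
     (\<forall>p P. N p = Some P \<longrightarrow> fv P = {} \<and> guarded P \<and> distinct (labels P))"

definition is_path :: "(nat \<Rightarrow> ('loc, 'msg, 'lab, 'var) network)
     \<Rightarrow> (nat \<Rightarrow> ('loc, 'msg) act \<times> ('loc, 'lab) instr set) \<Rightarrow> enat \<Rightarrow> bool" where
  "is_path s tr n \<longleftrightarrow>
     (\<forall>i. enat i < n \<longrightarrow> step (s i) (fst (tr i)) (snd (tr i)) (s (Suc i))) \<and>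
     (\<forall>k. n = enat k \<longrightarrow> \<not> (\<exists>a Is N'. step (s k) a Is N'))"

text \<open>Suffixes are indexed by their starting position j (with j \<le> n).\<close>
definition SWI_fair :: "(nat \<Rightarrow> ('loc, 'msg, 'lab, 'var) network)
     \<Rightarrow> (nat \<Rightarrow> ('loc, 'msg) act \<times> ('loc, 'lab) instr set) \<Rightarrow> enat \<Rightarrow> bool" where
  "SWI_fair s tr n \<longleftrightarrow>
     (\<forall>j. enat j \<le> n \<longrightarrow> (\<forall>I.
        (\<forall>i. j \<le> i \<and> enat i \<le> n \<longrightarrow> requested I (s i)) \<and>
        (\<forall>k. j \<le> k \<and> enat k \<le> n \<longrightarrow> (\<exists>i. k \<le> i \<and> enat i \<le> n \<and> enabled I (s i)))
        \<longrightarrow> (\<exists>i. j \<le> i \<and> enat i < n \<and> I \<in> snd (tr i))))"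

definition SC_fair :: "(nat \<Rightarrow> ('loc, 'msg, 'lab, 'var) network)
     \<Rightarrow> (nat \<Rightarrow> ('loc, 'msg) act \<times> ('loc, 'lab) instr set) \<Rightarrow> enat \<Rightarrow> bool" where
  "SC_fair s tr n \<longleftrightarrow>
     (\<forall>j. enat j \<le> n \<longrightarrow> (\<forall>p.
        (\<forall>k. j \<le> k \<and> enat k \<le> n \<longrightarrow>
            (\<exists>i a Is N'. k \<le> i \<and> enat i \<le> n \<and> step (s i) a Is N' \<and> p \<in> comp a))
        \<longrightarrow> (\<exists>i. j \<le> i \<and> enat i < n \<and> p \<in> comp (fst (tr i)))))"

end

theory Submission
  imports Defs
begin

text \<open>A location that does not move keeps its thread, and a thread has only finitely many
  ready instructions. Hence if a location is infinitely often able to move but never moves, one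
  of its ready instructions is requested throughout and infinitely often enabled, and SWI forces
  it to be executed. Conversely, when an instruction of p is requested throughout and infinitely
  often enabled, SC makes p move; a move of p that does not execute the instruction yet keeps it
  ready can only be an input of p, which strictly shrinks p's thread, so after finitely many moves
  the instruction is executed.\<close>

definition recurrent :: "enat \<Rightarrow> nat \<Rightarrow> (nat \<Rightarrow> bool) \<Rightarrow> bool" where
  "recurrent n j P \<longleftrightarrow> (\<forall>k. j \<le> k \<and> enat k \<le> n \<longrightarrow> (\<exists>i. k \<le> i \<and> enat i \<le> n \<and> P i))"

definition can_move :: "'loc \<Rightarrow> ('loc, 'msg, 'lab, 'var) network \<Rightarrow> bool" where
  "can_move p N \<longleftrightarrow> (\<exists>a Is N'. step N a Is N' \<and> p \<in> comp a)"

lemma SWI_fair_iff: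
  "SWI_fair s tr n \<longleftrightarrow> (\<forall>j. enat j \<le> n \<longrightarrow> (\<forall>I.
     (\<forall>i. j \<le> i \<and> enat i \<le> n \<longrightarrow> requested I (s i)) \<and> recurrent n j (\<lambda>i. enabled I (s i))
     \<longrightarrow> (\<exists>i. j \<le> i \<and> enat i < n \<and> I \<in> snd (tr i))))"
  unfolding SWI_fair_def recurrent_def by (rule refl)

lemma SC_fair_iff:
  "SC_fair s tr n \<longleftrightarrow> (\<forall>j. enat j \<le> n \<longrightarrow> (\<forall>p.
     recurrent n j (\<lambda>i. can_move p (s i))
     \<longrightarrow> (\<exists>i. j \<le> i \<and> enat i < n \<and> p \<in> comp (fst (tr i)))))"
  unfolding SC_fair_def recurrent_def can_move_def by simp

lemma recurrent_mono: "recurrent n j P \<Longrightarrow> j \<le> j' \<Longrightarrow> recurrent n j' P"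
  unfolding recurrent_def by auto

lemma recurrent_imp:
  "recurrent n j P \<Longrightarrow> (\<And>i. j \<le> i \<Longrightarrow> enat i \<le> n \<Longrightarrow> P i \<Longrightarrow> Q i) \<Longrightarrow> recurrent n j Q"
  unfolding recurrent_def by (meson order_trans)

lemma recurrent_finite_pigeonhole:
  assumes "finite L" "enat j \<le> n" "recurrent n j (\<lambda>i. \<exists>l\<in>L. P l i)"
  shows "\<exists>l\<in>L. recurrent n j (P l)"
proof (rule ccontr)
  assume "\<not> ?thesis"
  then have "\<forall>l\<in>L. \<exists>k. j \<le> k \<and> enat k \<le> n \<and> (\<forall>i. k \<le> i \<and> enat i \<le> n \<longrightarrow> \<not> P l i)"
    unfolding recurrent_def by blast
  then obtain f where f: "\<And>l. l \<in> L \<Longrightarrow> j \<le> f l" "\<And>l. l \<in> L \<Longrightarrow> enat (f l) \<le> n"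
      "\<And>l i. l \<in> L \<Longrightarrow> f l \<le> i \<Longrightarrow> enat i \<le> n \<Longrightarrow> \<not> P l i"
    by metis
  define K where "K = Max (insert j (f ` L))"
  have fin: "finite (insert j (f ` L))"
    using assms(1) by simp
  have "K \<in> insert j (f ` L)"
    unfolding K_def using fin Max_in by blast
  then have "enat K \<le> n"
    using assms(2) f(2) by auto
  moreover have "j \<le> K"
    unfolding K_def using fin by simp
  ultimately obtain i l where "K \<le> i" "enat i \<le> n" "l \<in> L" "P l i"
    using assms(3) unfolding recurrent_def by blast
  moreover have "f l \<le> K"
    unfolding K_def using fin \<open>l \<in> L\<close> by simp
  ultimately show False
    using f(3) by fastforce
qed

lemma step_instr_comp: "step N a Is N' \<Longrightarrow> I \<in> Is \<Longrightarrow> fst I \<in> comp a"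
  by (induction rule: step.induct) auto

lemma step_frame: "step N a Is N' \<Longrightarrow> p \<notin> comp a \<Longrightarrow> N' p = N p"
  by (induction rule: step.induct) auto

lemma step_comp_defined: "step N a Is N' \<Longrightarrow> p \<in> comp a \<Longrightarrow> N p \<noteq> None"
  by (induction rule: step.induct) auto

lemma step_comp_ready:
  assumes "step N a Is N'" "p \<in> comp a" "N p = Some T"
  shows "\<exists>l\<in>ready T. (p, l) \<in> Is"
  using assms
proof (induction rule: step.induct)
  case (choice N p bs k l q m P)
  then show ?case using nth_mem[OF choice.hyps(2)] by (force simp: image_iff)
next
  case (unfold N p l X P)
  then show ?case by auto
next
  case (comm N p l q m Q bs k l' P)
  then show ?case using nth_mem[OF comm.hyps(3)] by (force simp: image_iff)
qed

lemma enabled_imp_can_move: "enabled (p, l) N \<Longrightarrow> can_move p N"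
  unfolding enabled_def can_move_def using step_instr_comp by fastforce

lemma can_move_imp_enabled_ready:
  assumes "can_move p N" "N p = Some T"
  shows "\<exists>l\<in>ready T. enabled (p, l) N"
proof -
  obtain a Is N' where step: "step N a Is N'" and "p \<in> comp a"
    using assms(1) unfolding can_move_def by blast
  obtain l where "l \<in> ready T" "(p, l) \<in> Is"
    using step_comp_ready[OF step \<open>p \<in> comp a\<close> assms(2)] by blast
  with step show ?thesis
    unfolding enabled_def by blast
qed

lemma finite_ready: "finite (ready T)"
  by (cases T) auto

lemma size_Branch_continuation: "(l, q, m, P) \<in> set bs \<Longrightarrow> size P < size (Branch bs)"
  by (induction bs) auto

lemma step_keeps_ready_shrinks:
  assumes "step N a Is N'" "p \<in> comp a" "(p, l) \<notin> Is"
    and "N p = Some T" "l \<in> ready T" "N' p = Some T'" "l \<in> ready T'"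
  shows "size T' < size T"
  using assms
proof (induction rule: step.induct)
  case (comm N p' l0 q m Q bs k l' P)
  then have "p = q" "T = Branch bs" "T' = P"
    by (auto split: if_splits)
  then show ?case
    using size_Branch_continuation nth_mem[OF comm.hyps(3)] comm.hyps(4) by metis
qed auto

lemma path_step:
  "is_path s tr n \<Longrightarrow> enat i < n \<Longrightarrow> step (s i) (fst (tr i)) (snd (tr i)) (s (Suc i))"
  unfolding is_path_def by blast

lemma path_frame:
  assumes path: "is_path s tr n" and "j \<le> i" "enat i \<le> n"
    and "\<And>k. j \<le> k \<Longrightarrow> k < i \<Longrightarrow> p \<notin> comp (fst (tr k))"
  shows "s i p = s j p"
  using assms(2-)
proof (induction i rule: dec_induct)
  case (step i)
  then have "enat i < n"
    using Suc_ile_eq by blast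
  then have "s (Suc i) p = s i p"
    using step_frame[OF path_step[OF path]] step.prems(2) step.hyps(1) by blast
  then show ?case
    using step by (simp add: Suc_ile_eq order_less_imp_le)
qed simp

lemma path_first_move:
  assumes path: "is_path s tr n" and "\<exists>i. j \<le> i \<and> enat i < n \<and> p \<in> comp (fst (tr i))"
  obtains i where "j \<le> i" "enat i < n" "p \<in> comp (fst (tr i))" "s i p = s j p"
proof -
  define i where "i = (LEAST i. j \<le> i \<and> enat i < n \<and> p \<in> comp (fst (tr i)))"
  have i: "j \<le> i" "enat i < n" "p \<in> comp (fst (tr i))"
    using LeastI_ex[OF assms(2)] unfolding i_def by auto
  have "p \<notin> comp (fst (tr k))" if "j \<le> k" "k < i" for k
  proof
    assume "p \<in> comp (fst (tr k))"
    moreover have "enat k < n"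
      using less_trans[OF _ i(2)] that(2) by simp
    ultimately have "i \<le> k"
      unfolding i_def using that(1) by (intro Least_le) simp
    with that(2) show False
      by simp
  qed
  then have "s i p = s j p"
    using path_frame[OF path i(1)] i(2) by (simp add: order_less_imp_le)
  with i that show ?thesis by blast
qed

lemma SWI_fair_imp_SC_fair:
  assumes path: "is_path s tr n" and SWI: "SWI_fair s tr n"
  shows "SC_fair s tr n"
  unfolding SC_fair_iff
proof (intro allI impI)
  fix j p
  assume jn: "enat j \<le> n" and moving: "recurrent n j (\<lambda>i. can_move p (s i))"
  show "\<exists>i. j \<le> i \<and> enat i < n \<and> p \<in> comp (fst (tr i))"
  proof (rule ccontr)
    assume idle: "\<not> ?thesis"
    have const: "s i p = s j p" if "j \<le> i" "enat i \<le> n" for i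
    proof (rule path_frame[OF path that])
      fix k
      assume "j \<le> k" "k < i"
      moreover have "enat k < n"
        using less_le_trans[OF _ that(2)] \<open>k < i\<close> by simp
      ultimately show "p \<notin> comp (fst (tr k))"
        using idle by blast
    qed
    obtain i where "j \<le> i" "enat i \<le> n" "can_move p (s i)"
      using moving jn unfolding recurrent_def by blast
    then obtain T where T: "s j p = Some T"
      using const step_comp_defined unfolding can_move_def by fastforce
    have "recurrent n j (\<lambda>i. \<exists>l\<in>ready T. enabled (p, l) (s i))"
      using moving
    proof (rule recurrent_imp)
      fix i
      assume "j \<le> i" "enat i \<le> n" and move: "can_move p (s i)"
      with const T have "s i p = Some T"
        by simp
      with move show "\<exists>l\<in>ready T. enabled (p, l) (s i)"
        by (rule can_move_imp_enabled_ready)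
    qed
    then obtain l where l: "l \<in> ready T" and en: "recurrent n j (\<lambda>i. enabled (p, l) (s i))"
      using recurrent_finite_pigeonhole[OF finite_ready jn, where P = "\<lambda>l i. enabled (p, l) (s i)"]
      by blast
    have "\<forall>i. j \<le> i \<and> enat i \<le> n \<longrightarrow> requested (p, l) (s i)"
      using const T l unfolding requested_def by simp
    from SWI[unfolded SWI_fair_iff, rule_format, OF jn conjI[OF this en]]
    obtain i where i: "j \<le> i" "enat i < n" "(p, l) \<in> snd (tr i)"
      by blast
    have "p \<in> comp (fst (tr i))"
      using step_instr_comp[OF path_step[OF path i(2)] i(3)] by simp
    with idle i show False
      by blast
  qed
qed

lemma SC_fair_executes_persistent_instr:
  assumes path: "is_path s tr n" and SC: "SC_fair s tr n"
  shows "enat j \<le> n \<Longrightarrow> s j p = Some T \<Longrightarrow>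
    \<forall>i. j \<le> i \<and> enat i \<le> n \<longrightarrow> requested (p, l) (s i) \<Longrightarrow>
    recurrent n j (\<lambda>i. enabled (p, l) (s i)) \<Longrightarrow>
    \<exists>i. j \<le> i \<and> enat i < n \<and> (p, l) \<in> snd (tr i)"
proof (induction T arbitrary: j rule: measure_induct_rule[of size])
  case (less T j)
  have "recurrent n j (\<lambda>i. can_move p (s i))"
    using less.prems(4) by (rule recurrent_imp) (rule enabled_imp_can_move)
  from SC[unfolded SC_fair_iff, rule_format, OF less.prems(1) this]
  obtain i where i: "j \<le> i" "enat i < n" "p \<in> comp (fst (tr i))" "s i p = Some T"
    using path_first_move[OF path] less.prems(2) by metis
  show ?case
  proof (cases "(p, l) \<in> snd (tr i)")
    case True
    with i show ?thesis by blast
  next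
    case False
    have Suc_i: "enat (Suc i) \<le> n"
      using i(2) by (simp add: Suc_ile_eq)
    have "requested (p, l) (s i)"
      using less.prems(3) i(1,2) by (simp add: order_less_imp_le)
    then have "l \<in> ready T"
      using i(4) by (simp add: requested_def)
    moreover have "requested (p, l) (s (Suc i))"
      using less.prems(3) i(1) Suc_i by simp
    then obtain T' where T': "s (Suc i) p = Some T'" "l \<in> ready T'"
      unfolding requested_def by auto
    ultimately have "size T' < size T"
      using step_keeps_ready_shrinks[OF path_step[OF path i(2)] i(3) False i(4)] by blast
    moreover have "\<forall>i'. Suc i \<le> i' \<and> enat i' \<le> n \<longrightarrow> requested (p, l) (s i')"
      using less.prems(3) i(1) by simp
    moreover have "recurrent n (Suc i) (\<lambda>i'. enabled (p, l) (s i'))"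
      using recurrent_mono[OF less.prems(4)] i(1) by simp
    ultimately obtain i' where "Suc i \<le> i'" "enat i' < n" "(p, l) \<in> snd (tr i')"
      using less.IH[OF _ Suc_i T'(1)] by blast
    with i(1) show ?thesis
      by (intro exI[of _ i']) simp
  qed
qed

lemma SC_fair_imp_SWI_fair:
  assumes "is_path s tr n" "SC_fair s tr n"
  shows "SWI_fair s tr n"
  unfolding SWI_fair_iff
proof (intro allI impI)
  fix j I
  assume jn: "enat j \<le> n" and "(\<forall>i. j \<le> i \<and> enat i \<le> n \<longrightarrow> requested I (s i)) \<and>
    recurrent n j (\<lambda>i. enabled I (s i))"
  then have req: "\<forall>i. j \<le> i \<and> enat i \<le> n \<longrightarrow> requested I (s i)"
    and en: "recurrent n j (\<lambda>i. enabled I (s i))"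
    by blast+
  obtain p l where I: "I = (p, l)"
    by (cases I)
  obtain T where "s j p = Some T"
    using req jn unfolding requested_def I by auto
  from SC_fair_executes_persistent_instr[OF assms jn this req[unfolded I] en[unfolded I]]
  show "\<exists>i. j \<le> i \<and> enat i < n \<and> I \<in> snd (tr i)"
    unfolding I .
qed

theorem mainTheorem18:
  fixes s :: "nat \<Rightarrow> ('loc, 'msg, 'lab, 'var) network"
    and tr :: "nat \<Rightarrow> ('loc, 'msg) act \<times> ('loc, 'lab) instr set"
    and n :: enat
  assumes "wf_network (s 0)"
    and "is_path s tr n"
  shows "SWI_fair s tr n \<longleftrightarrow> SC_fair s tr n"
  using SWI_fair_imp_SC_fair[OF assms(2)] SC_fair_imp_SWI_fair[OF assms(2)] ..

end
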